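(* Let $\mathcal A$ be a complex unital algebra which is purely infinite. Then $\mathcal A$ is (1) simple, i.e. its only two-sided ideals are $\{0\}$ and $\mathcal A$; and (2) properly infinite, i.e. there exist idempotents $p,q\in\mathcal A$ with $p\sim 1_{\mathcal A}$, $q\sim 1_{\mathcal A}$ and $p\perp q$.
   Context: A complex unital algebra $\mathcal A$ is purely infinite if it is not a division algebra and for every non-zero $a\in\mathcal A$ there exist $b,c\in\mathcal A$ with $bac=1_{\mathcal A}$. Two idempotents $p,q$ are (algebraically Murray–von Neumann) equivalent, $p\sim q$, if there exist $a,b\in\mathcal A$ with $p=ab$ and $q=ba$. Idempotents $p,q$ are orthogonal, $p\perp q$, if $pq=0=qp$. *)

theory Defs
  imports Complex_Main
begin

class complex_algebra_1 = ring_1 +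
  fixes scaleC :: "complex \<Rightarrow> 'a \<Rightarrow> 'a"
  assumes scaleC_add_right: "scaleC c (x + y) = scaleC c x + scaleC c y"
    and scaleC_add_left: "scaleC (c + d) x = scaleC c x + scaleC d x"
    and scaleC_scaleC: "scaleC c (scaleC d x) = scaleC (c * d) x"
    and scaleC_one: "scaleC 1 x = x"
    and scaleC_mult_left: "scaleC c x * y = scaleC c (x * y)"
    and scaleC_mult_right: "x * scaleC c y = scaleC c (x * y)"

definition is_division_algebra :: "'a::complex_algebra_1 itself \<Rightarrow> bool" where
  "is_division_algebra _ \<longleftrightarrow> (1::'a) \<noteq> 0 \<and>
     (\<forall>a::'a. a \<noteq> 0 \<longrightarrow> (\<exists>b. a * b = 1 \<and> b * a = 1))"

definition purely_infinite :: "'a::complex_algebra_1 itself \<Rightarrow> bool" where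
  "purely_infinite T \<longleftrightarrow> \<not> is_division_algebra T \<and>
     (\<forall>a::'a. a \<noteq> 0 \<longrightarrow> (\<exists>b c. b * a * c = 1))"

definition alg_ideal :: "'a::complex_algebra_1 set \<Rightarrow> bool" where
  "alg_ideal I \<longleftrightarrow> 0 \<in> I \<and> (\<forall>x\<in>I. \<forall>y\<in>I. x + y \<in> I) \<and> (\<forall>x\<in>I. - x \<in> I) \<and>
     (\<forall>c. \<forall>x\<in>I. scaleC c x \<in> I) \<and> (\<forall>a. \<forall>x\<in>I. a * x \<in> I \<and> x * a \<in> I)"

definition simple_algebra :: "'a::complex_algebra_1 itself \<Rightarrow> bool" where
  "simple_algebra _ \<longleftrightarrow> (\<forall>I::'a set. alg_ideal I \<longrightarrow> I = {0} \<or> I = UNIV)"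

definition idempotent :: "'a::complex_algebra_1 \<Rightarrow> bool" where
  "idempotent p \<longleftrightarrow> p * p = p"

definition mvn_equiv :: "'a::complex_algebra_1 \<Rightarrow> 'a \<Rightarrow> bool" where
  "mvn_equiv p q \<longleftrightarrow> (\<exists>a b. p = a * b \<and> q = b * a)"

definition orthogonal :: "'a::complex_algebra_1 \<Rightarrow> 'a \<Rightarrow> bool" where
  "orthogonal p q \<longleftrightarrow> p * q = 0 \<and> q * p = 0"

definition properly_infinite :: "'a::complex_algebra_1 itself \<Rightarrow> bool" where
  "properly_infinite _ \<longleftrightarrow> (\<exists>p q::'a. idempotent p \<and> idempotent q \<and>
     mvn_equiv p 1 \<and> mvn_equiv q 1 \<and> orthogonal p q)"

end

theory Submission
  imports Defs
begin

text \<open>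
  An ideal containing a nonzero element contains some \<open>b * a * c = 1\<close>, hence everything, which
  gives simplicity. For proper infiniteness, first note that \<open>\<A>\<close> is not Dedekind finite:
  otherwise \<open>b * a * c = 1\<close> would make every nonzero \<open>a\<close> invertible and \<open>\<A>\<close> a division
  algebra. So there are \<open>x, y\<close> with \<open>x * y = 1 \<noteq> y * x\<close>; then \<open>p = y * x \<sim> 1\<close> and the
  complementary idempotent \<open>e = 1 - p\<close> is nonzero. Choosing \<open>b * e * c = 1\<close>, the idempotent
  \<open>q = (e * c) * (b * e) \<sim> 1\<close> lies under \<open>e\<close> and is therefore orthogonal to \<open>p\<close>.
\<close>

lemma alg_ideal_eq_UNIV:
  assumes "alg_ideal I" and "a \<in> I" and "b * a * c = 1"
  shows "I = UNIV"
proof -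
  have "b * a * c \<in> I"
    using assms(1,2) unfolding alg_ideal_def by blast
  then have "1 \<in> I"
    using assms(3) by simp
  then have "z * 1 \<in> I" for z
    using assms(1) unfolding alg_ideal_def by blast
  then show ?thesis
    by auto
qed

lemma purely_infinite_imp_simple_algebra:
  assumes "purely_infinite TYPE('a::complex_algebra_1)"
  shows "simple_algebra TYPE('a)"
  unfolding simple_algebra_def
proof (intro allI impI)
  fix I :: "'a set"
  assume I: "alg_ideal I"
  show "I = {0} \<or> I = UNIV"
  proof (cases "I \<subseteq> {0}")
    case True
    then show ?thesis
      using I unfolding alg_ideal_def by blast
  next
    case False
    then obtain a where "a \<in> I" "a \<noteq> 0"
      by blast
    with assms obtain b c where "b * a * c = 1"
      unfolding purely_infinite_def by blast
    with I \<open>a \<in> I\<close> have "I = UNIV"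
      by (rule alg_ideal_eq_UNIV)
    then show ?thesis ..
  qed
qed

lemma invertible_if_dedekind_finite:
  fixes a :: "'a::monoid_mult"
  assumes dedekind_finite: "\<And>x y::'a. x * y = 1 \<Longrightarrow> y * x = 1"
    and "b * a * c = 1"
  shows "a * (c * b) = 1 \<and> (c * b) * a = 1"
proof -
  have "c * (b * a) = 1"
    using dedekind_finite[of "b * a" c] assms(2) by simp
  moreover have "a * c * b = 1"
    using dedekind_finite[of b "a * c"] assms(2) by (simp add: mult.assoc)
  ultimately show ?thesis
    by (simp add: mult.assoc)
qed

lemma purely_infinite_not_dedekind_finite:
  assumes "purely_infinite TYPE('a::complex_algebra_1)" and "(1::'a) \<noteq> 0"
  obtains x y :: "'a::complex_algebra_1" where "x * y = 1" and "y * x \<noteq> 1"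
proof -
  obtain a :: 'a where a: "a \<noteq> 0" "\<nexists>d. a * d = 1 \<and> d * a = 1"
    using assms unfolding purely_infinite_def is_division_algebra_def by blast
  with assms(1) obtain b c where "b * a * c = 1"
    unfolding purely_infinite_def by blast
  with a(2) have "\<not> (\<forall>x y::'a. x * y = 1 \<longrightarrow> y * x = 1)"
    using invertible_if_dedekind_finite by blast
  with that show ?thesis
    by blast
qed

lemma idempotent_mvn_equiv_one:
  fixes u v :: "'a::complex_algebra_1"
  assumes "v * u = 1"
  shows "idempotent (u * v)" and "mvn_equiv (u * v) 1"
  unfolding idempotent_def mvn_equiv_def
  using assms by (metis mult.assoc mult_1_left)+

lemma properly_infinite_if_trivial:
  assumes "(1::'a::complex_algebra_1) = 0"
  shows "properly_infinite TYPE('a)"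
proof -
  have "x = 0" for x :: 'a
    by (metis assms mult_1_left mult_zero_left)
  then show ?thesis
    unfolding properly_infinite_def idempotent_def mvn_equiv_def orthogonal_def by metis
qed

lemma properly_infinite_if_not_dedekind_finite:
  fixes x y :: "'a::complex_algebra_1"
  assumes "purely_infinite TYPE('a)" and "x * y = 1" and "y * x \<noteq> 1"
  shows "properly_infinite TYPE('a)"
proof -
  define p where "p = y * x"
  define e where "e = 1 - p"
  have p: "idempotent p" "mvn_equiv p 1"
    unfolding p_def using idempotent_mvn_equiv_one assms(2) by blast+
  then have ep: "e * p = 0" "p * e = 0" and e: "e * e = e"
    unfolding e_def idempotent_def by (simp_all add: algebra_simps)
  have "e \<noteq> 0"
    using assms(3) unfolding e_def p_def by simp
  with assms(1) obtain b c where bc: "b * e * c = 1"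
    unfolding purely_infinite_def by blast
  define q where "q = (e * c) * (b * e)"
  have "(b * e) * (e * c) = 1"
    using bc e by (metis mult.assoc)
  then have q: "idempotent q" "mvn_equiv q 1"
    unfolding q_def using idempotent_mvn_equiv_one by blast+
  have "orthogonal p q"
    unfolding orthogonal_def q_def using ep by (simp add: mult.assoc flip: mult.assoc[of p e])
  with p q show ?thesis
    unfolding properly_infinite_def by blast
qed

theorem lemma1p2:
  assumes "purely_infinite TYPE('a::complex_algebra_1)"
  shows "simple_algebra TYPE('a) \<and> properly_infinite TYPE('a)"
proof
  show "simple_algebra TYPE('a)"
    using assms by (rule purely_infinite_imp_simple_algebra)
  show "properly_infinite TYPE('a)"
  proof (cases "(1::'a) = 0")
    case True
    then show ?thesis
      by (rule properly_infinite_if_trivial)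
  next
    case False
    with assms obtain x y :: 'a where "x * y = 1" "y * x \<noteq> 1"
      by (rule purely_infinite_not_dedekind_finite)
    with assms show ?thesis
      by (rule properly_infinite_if_not_dedekind_finite)
  qed
qed

end
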